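(* Let $N\ge 2$ be an integer and $\kappa,m>0$. For every fixed $k_1\in\mathbb{Z}\cap(0,N)$, $$\sum_{\substack{k_2,k_3,k_4\in\mathbb{Z}\cap(0,N)\\ k_1-k_2+k_3+k_4\equiv 0\ (\mathrm{mod}\ N)}}\big|A^{(2)}_{1,2,3,4}\big|^2\le C\,N^2\log N,$$ with $C>0$ depending only on $\kappa,m$.
   Context: For an integer $N\ge 2$ and constants $\kappa,m>0$, define for $k\in\mathbb{Z}$ the frequency $\omega_k=2\sqrt{\kappa/m}\,\big|\sin(\pi k/N)\big|$ and the $2N$-periodic sign function $\iota(x)=\operatorname{sgn}\sin(\pi x/N)$. For integers $k_1,k_2,k_3,k_4$ set $$T_{1,-2,3,4}=-\frac{3}{4\kappa^2}\,\iota(-k_2+k_3+k_4)\,\iota(-k_2)\,\iota(k_3)\,\iota(k_4)\prod_{i=1}^4\sqrt{\omega_{k_i}},\qquad A^{(2)}_{1,2,3,4}=-\frac{T_{1,-2,3,4}}{\omega_{k_1}-\omega_{k_2}+\omega_{k_3}+\omega_{k_4}}.$$ On the summation range (all $k_i\in\mathbb{Z}\cap(0,N)$, $k_1-k_2+k_3+k_4\equiv 0$ mod $N$) the denominator does not vanish. *)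

theory Defs
  imports Complex_Main
begin

definition omega :: "real \<Rightarrow> real \<Rightarrow> nat \<Rightarrow> int \<Rightarrow> real" where
  "omega \<kappa> m N k = 2 * sqrt (\<kappa> / m) * \<bar>sin (pi * real_of_int k / real N)\<bar>"

definition iota :: "nat \<Rightarrow> int \<Rightarrow> real" where
  "iota N x = sgn (sin (pi * real_of_int x / real N))"

definition Tcoef :: "real \<Rightarrow> real \<Rightarrow> nat \<Rightarrow> int \<Rightarrow> int \<Rightarrow> int \<Rightarrow> int \<Rightarrow> real" where
  "Tcoef \<kappa> m N k1 k2 k3 k4 =
     - (3 / (4 * \<kappa>\<^sup>2)) * iota N (- k2 + k3 + k4) * iota N (- k2) * iota N k3 * iota N k4
     * (sqrt (omega \<kappa> m N k1) * sqrt (omega \<kappa> m N k2) * sqrt (omega \<kappa> m N k3)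
        * sqrt (omega \<kappa> m N k4))"

definition A2 :: "real \<Rightarrow> real \<Rightarrow> nat \<Rightarrow> int \<Rightarrow> int \<Rightarrow> int \<Rightarrow> int \<Rightarrow> real" where
  "A2 \<kappa> m N k1 k2 k3 k4 =
     - Tcoef \<kappa> m N k1 k2 k3 k4
     / (omega \<kappa> m N k1 - omega \<kappa> m N k2 + omega \<kappa> m N k3 + omega \<kappa> m N k4)"

definition sum_range :: "nat \<Rightarrow> int \<Rightarrow> (int \<times> int \<times> int) set" where
  "sum_range N k1 = {(k2, k3, k4). 0 < k2 \<and> k2 < int N \<and> 0 < k3 \<and> k3 < int N
      \<and> 0 < k4 \<and> k4 < int N \<and> int N dvd (k1 - k2 + k3 + k4)}"

end

theory Submission
  imports Defs "HOL-Analysis.Convex" "HOL-Analysis.Harmonic_Numbers"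
begin

text \<open>
  Write \<open>\<omega>\<^sub>k = 2 sqrt(\<kappa>/m) |sin \<theta>\<^sub>k|\<close> with phases \<open>\<theta>\<^sub>k = \<pi> k / N\<close>; then \<open>T\<^sup>2 \<le> 9/(16 \<kappa>\<^sup>4) \<omega>\<^sub>1 \<omega>\<^sub>2 \<omega>\<^sub>3 \<omega>\<^sub>4\<close>.
  On the summation range \<open>\<theta>\<^sub>2 \<equiv> \<theta>\<^sub>1 + \<theta>\<^sub>3 + \<theta>\<^sub>4\<close> modulo \<open>\<pi>\<close>, and the elementary inequality
  \<open>|sin x| |sin y| (|sin x| + |sin y|) / 2 \<le> |sin x| + |sin y| + |sin z| - |sin (x + y + z)|\<close>,
  applied to the pairs \<open>(\<theta>\<^sub>1, \<theta>\<^sub>3)\<close> and \<open>(\<theta>\<^sub>3, \<theta>\<^sub>4)\<close>, bounds the denominator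
  \<open>\<omega>\<^sub>1 - \<omega>\<^sub>2 + \<omega>\<^sub>3 + \<omega>\<^sub>4\<close> from below well enough to give
  \<open>A2\<^sup>2 \<le> const / max(|sin \<theta>\<^sub>3|, |sin \<theta>\<^sub>4|)\<^sup>2 \<le> const N\<^sup>2 / max(d\<^sub>3, d\<^sub>4)\<^sup>2\<close>, where
  \<open>d\<^sub>k = min k (N - k)\<close> and the last step is Jordan's inequality. Since \<open>k\<^sub>2\<close> is determined by
  \<open>k\<^sub>3, k\<^sub>4\<close>, folding \<open>d\<^sub>k\<close> back to \<open>k\<close> bounds the sum by \<open>const N\<^sup>2\<close> times
  \<open>\<Sum> 1 / max(i, j)\<^sup>2\<close> over \<open>1 \<le> i, j \<le> N\<close>, which is at most \<open>2 H\<^sub>N = O(log N)\<close>.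
\<close>

section \<open>Trigonometric estimates\<close>

lemma abs_sin_add_le_mult_abs_cos: "\<bar>sin (x + y)\<bar> \<le> \<bar>sin x\<bar> * \<bar>cos y\<bar> + \<bar>cos x\<bar> * \<bar>sin y\<bar>"
  for x y :: real
  unfolding sin_add by (metis abs_mult abs_triangle_ineq)

lemma abs_sin_add_le: "\<bar>sin (x + y)\<bar> \<le> \<bar>sin x\<bar> + \<bar>sin y\<bar>"
  for x y :: real
proof -
  have "\<bar>sin x\<bar> * \<bar>cos y\<bar> \<le> \<bar>sin x\<bar>" "\<bar>cos x\<bar> * \<bar>sin y\<bar> \<le> \<bar>sin y\<bar>"
    by (simp_all add: mult_left_le mult_left_le_one_le)
  then show ?thesis
    using abs_sin_add_le_mult_abs_cos[of x y] by linarith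
qed

lemma abs_sin_add_int_mult_pi: "\<bar>sin (x + of_int j * pi)\<bar> = \<bar>sin x\<bar>"
proof -
  have "sin (of_int j * pi) = 0"
    using sin_zero_iff_int2 by blast
  moreover have "\<bar>cos (of_int j * pi)\<bar> = 1"
    using sin_cos_squared_add[of "of_int j * pi"] calculation by (auto simp: power2_eq_1_iff)
  ultimately show ?thesis
    by (simp add: sin_add abs_mult)
qed

lemma half_sin_squared_le_one_minus_abs_cos: "(sin y)\<^sup>2 / 2 \<le> 1 - \<bar>cos y\<bar>"
  for y :: real
proof -
  have "(sin y)\<^sup>2 = (1 - \<bar>cos y\<bar>) * (1 + \<bar>cos y\<bar>)"
    using sin_cos_squared_add[of y] by (simp add: algebra_simps power2_eq_square)
  also have "\<dots> \<le> (1 - \<bar>cos y\<bar>) * 2"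
    by (intro mult_left_mono) auto
  finally show ?thesis by simp
qed

text \<open>On the summation range this is \<open>(\<omega>\<^sub>1 - \<omega>\<^sub>2 + \<omega>\<^sub>3 + \<omega>\<^sub>4) / (2 sqrt(\<kappa>/m))\<close> for the phases
  \<open>a, b, c\<close> of \<open>k\<^sub>1, k\<^sub>3, k\<^sub>4\<close>.\<close>

definition sin_defect :: "real \<Rightarrow> real \<Rightarrow> real \<Rightarrow> real" where
  "sin_defect a b c = \<bar>sin a\<bar> - \<bar>sin (a + b + c)\<bar> + \<bar>sin b\<bar> + \<bar>sin c\<bar>"

lemma sin_defect_commute: "sin_defect a c b = sin_defect a b c"
  unfolding sin_defect_def by (simp add: ac_simps)

lemma sin_defect_ge_pair: "\<bar>sin a\<bar> * \<bar>sin b\<bar> * (\<bar>sin a\<bar> + \<bar>sin b\<bar>) / 2 \<le> sin_defect a b c"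
proof -
  have "\<bar>sin (a + b + c)\<bar> \<le> \<bar>sin a\<bar> * \<bar>cos b\<bar> + \<bar>cos a\<bar> * \<bar>sin b\<bar> + \<bar>sin c\<bar>"
    using abs_sin_add_le[of "a + b" c] abs_sin_add_le_mult_abs_cos[of a b] by linarith
  moreover have "\<bar>sin a\<bar> * ((sin b)\<^sup>2 / 2) \<le> \<bar>sin a\<bar> - \<bar>sin a\<bar> * \<bar>cos b\<bar>"
    "\<bar>sin b\<bar> * ((sin a)\<^sup>2 / 2) \<le> \<bar>sin b\<bar> - \<bar>cos a\<bar> * \<bar>sin b\<bar>"
    using mult_left_mono[OF half_sin_squared_le_one_minus_abs_cos, of "\<bar>sin a\<bar>" b]
      mult_left_mono[OF half_sin_squared_le_one_minus_abs_cos, of "\<bar>sin b\<bar>" a]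
    by (simp_all add: right_diff_distrib mult.commute)
  moreover have "\<bar>sin a\<bar> * \<bar>sin b\<bar> * (\<bar>sin a\<bar> + \<bar>sin b\<bar>) / 2
      = \<bar>sin a\<bar> * ((sin b)\<^sup>2 / 2) + \<bar>sin b\<bar> * ((sin a)\<^sup>2 / 2)"
    by (simp add: power2_eq_square algebra_simps)
  ultimately show ?thesis
    unfolding sin_defect_def by linarith
qed

lemma sin_prod_le_sin_defect_squared:
  "\<bar>sin a\<bar> * \<bar>sin (a + b + c)\<bar> * \<bar>sin b\<bar> * \<bar>sin c\<bar> * (sin b)\<^sup>2 \<le> 4 * (sin_defect a b c)\<^sup>2"
proof -
  define s1 s2 s3 s4 where "s1 = \<bar>sin a\<bar>" "s2 = \<bar>sin (a + b + c)\<bar>" "s3 = \<bar>sin b\<bar>" "s4 = \<bar>sin c\<bar>"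
  define D where "D = sin_defect a b c"
  have nonneg: "0 \<le> s1" "0 \<le> s2" "0 \<le> s3" "0 \<le> s4"
    unfolding s1_s2_s3_s4_def by simp_all
  have D13: "s1 * s3 * (s1 + s3) / 2 \<le> D"
    using sin_defect_ge_pair[of a b c] unfolding s1_s2_s3_s4_def D_def .
  have D34: "s3 * s4 * (s3 + s4) / 2 \<le> D"
    using sin_defect_ge_pair[of b c a] unfolding s1_s2_s3_s4_def D_def sin_defect_def
    by (simp add: ac_simps)
  have "0 \<le> s1 * s3 * (s1 + s3) / 2"
    using nonneg by simp
  with D13 have "0 \<le> D" by linarith
  have "s2 \<le> s1 + s3 + s4"
    using abs_sin_add_le[of "a + b" c] abs_sin_add_le[of a b] unfolding s1_s2_s3_s4_def by linarith
  then have "s3 * s2 \<le> s3 * (s1 + s3 + s4)"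
    using nonneg by (simp add: mult_left_mono)
  also have "\<dots> \<le> (s1 + s3) * (s3 + s4)"
    using nonneg by (simp add: algebra_simps)
  finally have "s3 * s2 \<le> (s1 + s3) * (s3 + s4)" .
  then have "s1 * s2 * s3 * s4 * s3\<^sup>2 \<le> 4 * ((s1 * s3 * (s1 + s3) / 2) * (s3 * s4 * (s3 + s4) / 2))"
    using mult_left_mono[of "s3 * s2" "(s1 + s3) * (s3 + s4)" "s1 * s3 * s3 * s4"] nonneg
    by (simp add: power2_eq_square algebra_simps)
  also have "\<dots> \<le> 4 * (D * D)"
    using D13 D34 nonneg \<open>0 \<le> D\<close> by (intro mult_left_mono mult_mono) auto
  finally show ?thesis
    unfolding s1_s2_s3_s4_def D_def by (simp add: power2_eq_square abs_mult)
qed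

lemma sin_prod_div_sin_defect_squared_le:
  assumes "0 < L" and "L \<le> max \<bar>sin b\<bar> \<bar>sin c\<bar>"
  shows "\<bar>sin a\<bar> * \<bar>sin (a + b + c)\<bar> * \<bar>sin b\<bar> * \<bar>sin c\<bar> / (sin_defect a b c)\<^sup>2 \<le> 4 / L\<^sup>2"
proof -
  define S where "S = \<bar>sin a\<bar> * \<bar>sin (a + b + c)\<bar> * \<bar>sin b\<bar> * \<bar>sin c\<bar>"
  define D where "D = sin_defect a b c"
  define s where "s = max \<bar>sin b\<bar> \<bar>sin c\<bar>"
  have "S * (sin b)\<^sup>2 \<le> 4 * D\<^sup>2"
    using sin_prod_le_sin_defect_squared[of a b c] unfolding S_def D_def .
  moreover have "S * (sin c)\<^sup>2 \<le> 4 * D\<^sup>2"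
  proof -
    have "a + c + b = a + b + c" by simp
    then show ?thesis
      using sin_prod_le_sin_defect_squared[of a c b]
      unfolding S_def D_def sin_defect_commute[of a b c] by (simp only: mult_ac)
  qed
  ultimately have "S * s\<^sup>2 \<le> 4 * D\<^sup>2"
    unfolding s_def by (cases "\<bar>sin b\<bar> \<le> \<bar>sin c\<bar>") (simp_all add: max_def)
  moreover have "0 < s"
    using assms unfolding s_def by linarith
  ultimately have "S \<le> 4 * D\<^sup>2 / s\<^sup>2"
    by (simp add: pos_le_divide_eq)
  then have "S / D\<^sup>2 \<le> 4 / s\<^sup>2"
    by (cases "D = 0") (simp_all add: pos_divide_le_eq)
  also have "\<dots> \<le> 4 / L\<^sup>2"
  proof -
    have "L\<^sup>2 \<le> s\<^sup>2"
      using assms unfolding s_def by (simp add: power_mono)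
    then show ?thesis
      using \<open>0 < L\<close> by (simp add: frac_le)
  qed
  finally show ?thesis
    unfolding S_def D_def .
qed

lemma sin_ge_two_div_pi_mult:
  fixes x :: real
  assumes "0 \<le> x" and "x \<le> pi / 2"
  shows "2 / pi * x \<le> sin x"
proof -
  have "convex_on {0..pi} (\<lambda>x. - sin x)"
    by (rule convex_on_realI[where f' = "\<lambda>x. - cos x"])
       (auto intro!: derivative_eq_intros cos_monotone_0_pi_le)
  then have "- sin ((1 - 2 / pi * x) *\<^sub>R 0 + (2 / pi * x) *\<^sub>R (pi / 2))
      \<le> (1 - 2 / pi * x) * - sin 0 + (2 / pi * x) * - sin (pi / 2)"
    using assms by (intro convex_onD) (auto simp: field_simps)
  then show ?thesis
    by simp
qed

lemma sin_pi_mult_div_ge: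
  fixes k N :: nat
  assumes "k \<le> N"
  shows "2 * real (min k (N - k)) / real N \<le> sin (pi * real k / real N)"
proof -
  have jordan: "2 * real i / real N \<le> sin (pi * real i / real N)" if "2 * i \<le> N" for i
    using sin_ge_two_div_pi_mult[of "pi * real i / real N"] that
    by (cases "N = 0") (auto simp: field_simps)
  show ?thesis
  proof (cases "2 * k \<le> N")
    case True
    then show ?thesis
      using jordan[of k] by simp
  next
    case False
    have "sin (pi * real (N - k) / real N) = sin (pi - pi * real k / real N)"
      using assms False by (simp add: of_nat_diff field_simps)
    then show ?thesis
      using jordan[of "N - k"] False by simp
  qed
qed

section \<open>Lattice sums\<close>

lemma harm_le_one_plus_ln:
  assumes "0 < n"
  shows "harm n \<le> 1 + ln (real n)"
  using euler_mascheroni_sequence_decreasing[of 1 n] assms by (simp add: harm_def)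

lemma sum_inverse_square_max_le_harm:
  "(\<Sum>i\<in>{1..n}. \<Sum>j\<in>{1..n}. 1 / real (max i j) ^ 2) \<le> 2 * harm n"
proof (induction n)
  case (Suc n)
  let ?f = "\<lambda>i j. 1 / real (max i j) ^ 2"
  have new_row: "(\<Sum>j\<in>{1..Suc n}. ?f (Suc n) j) = 1 / real (Suc n)"
  proof -
    have "(\<Sum>j\<in>{1..Suc n}. ?f (Suc n) j) = (\<Sum>j\<in>{1..Suc n}. 1 / real (Suc n) ^ 2)"
      by (intro sum.cong) (auto simp: max_def)
    then show ?thesis
      by (simp add: power2_eq_square)
  qed
  have new_column: "(\<Sum>i\<in>{1..n}. ?f i (Suc n)) \<le> 1 / real (Suc n)"
  proof -
    have "(\<Sum>i\<in>{1..n}. ?f i (Suc n)) = real n / real (Suc n) ^ 2"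
      by (simp add: max_def)
    also have "\<dots> \<le> 1 / real (Suc n)"
      by (simp add: power2_eq_square divide_simps)
    finally show ?thesis .
  qed
  have "(\<Sum>i\<in>{1..Suc n}. \<Sum>j\<in>{1..Suc n}. ?f i j)
      = (\<Sum>i\<in>{1..n}. \<Sum>j\<in>{1..n}. ?f i j) + (\<Sum>i\<in>{1..n}. ?f i (Suc n))
        + (\<Sum>j\<in>{1..Suc n}. ?f (Suc n) j)"
    by (simp add: sum.distrib)
  also have "\<dots> \<le> 2 * harm n + 2 / real (Suc n)"
    using Suc.IH new_row new_column by linarith
  also have "\<dots> = 2 * harm (Suc n)"
    by (simp add: harm_Suc inverse_eq_divide)
  finally show ?case .
qed (simp add: harm_def)

lemma sum_min_reflect_le:
  fixes G :: "nat \<Rightarrow> real"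
  assumes "\<And>i. 0 \<le> G i"
  shows "(\<Sum>y\<in>{1..N-1}. G (min y (N - y))) \<le> 2 * (\<Sum>i\<in>{1..N}. G i)"
proof -
  have "(\<Sum>y\<in>{1..N-1}. G (min y (N - y))) \<le> (\<Sum>y\<in>{1..N-1}. G y) + (\<Sum>y\<in>{1..N-1}. G (N - y))"
    unfolding sum.distrib[symmetric] using assms
    by (intro sum_mono) (auto simp: min_def add_increasing add_increasing2)
  also have "(\<Sum>y\<in>{1..N-1}. G (N - y)) = (\<Sum>y\<in>{1..N-1}. G y)"
    using sum.atLeastAtMost_rev[of G 1 "N - 1"] by (cases N) simp_all
  also have "(\<Sum>y\<in>{1..N-1}. G y) \<le> (\<Sum>i\<in>{1..N}. G i)"
    using assms by (intro sum_mono2) auto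
  finally show ?thesis by simp
qed

lemma sum_inverse_square_max_min_le:
  assumes "0 < N"
  shows "(\<Sum>y\<in>{1..N-1}. \<Sum>z\<in>{1..N-1}. 1 / real (max (min y (N - y)) (min z (N - z))) ^ 2)
     \<le> 8 * (1 + ln (real N))"
proof -
  let ?f = "\<lambda>i j. 1 / real (max i j) ^ 2"
  have "(\<Sum>y\<in>{1..N-1}. \<Sum>z\<in>{1..N-1}. ?f (min y (N - y)) (min z (N - z)))
      \<le> (\<Sum>y\<in>{1..N-1}. 2 * (\<Sum>j\<in>{1..N}. ?f (min y (N - y)) j))"
    by (intro sum_mono sum_min_reflect_le) simp
  also have "\<dots> = 2 * (\<Sum>j\<in>{1..N}. \<Sum>y\<in>{1..N-1}. ?f (min y (N - y)) j)"
    by (subst sum.swap) (simp add: sum_distrib_left)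
  also have "\<dots> \<le> 2 * (\<Sum>j\<in>{1..N}. 2 * (\<Sum>i\<in>{1..N}. ?f i j))"
    by (intro mult_left_mono sum_mono sum_min_reflect_le) simp_all
  also have "\<dots> = 4 * (\<Sum>i\<in>{1..N}. \<Sum>j\<in>{1..N}. ?f i j)"
    by (subst sum.swap) (simp add: sum_distrib_left)
  also have "\<dots> \<le> 8 * harm N"
    using sum_inverse_square_max_le_harm[of N] by simp
  also have "\<dots> \<le> 8 * (1 + ln (real N))"
    using harm_le_one_plus_ln[OF assms] by simp
  finally show ?thesis .
qed

section \<open>Bounding the coefficients\<close>

lemma omega_nonneg: "0 \<le> \<kappa> / m \<Longrightarrow> 0 \<le> omega \<kappa> m N k"
  by (simp add: omega_def)

lemma abs_iota_le_one: "\<bar>iota N x\<bar> \<le> 1"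
  by (simp add: iota_def sgn_if)

lemma Tcoef_squared_le:
  assumes "0 \<le> \<kappa> / m"
  shows "(Tcoef \<kappa> m N k1 k2 k3 k4)\<^sup>2
     \<le> 9 / (16 * \<kappa> ^ 4) * (omega \<kappa> m N k1 * omega \<kappa> m N k2 * omega \<kappa> m N k3 * omega \<kappa> m N k4)"
proof -
  define I where "I = iota N (- k2 + k3 + k4) * iota N (- k2) * iota N k3 * iota N k4"
  define P where "P = omega \<kappa> m N k1 * omega \<kappa> m N k2 * omega \<kappa> m N k3 * omega \<kappa> m N k4"
  have "\<bar>I\<bar> \<le> 1"
    unfolding I_def abs_mult using abs_iota_le_one
    by (intro mult_le_one) (simp_all add: mult_le_one)
  then have "I\<^sup>2 \<le> 1"
    using power_le_one[of "\<bar>I\<bar>" 2] by simp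
  have "(Tcoef \<kappa> m N k1 k2 k3 k4)\<^sup>2 = 9 / (16 * \<kappa> ^ 4) * I\<^sup>2 * P"
    unfolding Tcoef_def I_def P_def
    by (simp add: power_mult_distrib power_divide omega_nonneg assms)
  also have "\<dots> \<le> 9 / (16 * \<kappa> ^ 4) * 1 * P"
    using \<open>I\<^sup>2 \<le> 1\<close> by (intro mult_right_mono mult_left_mono) (simp_all add: P_def omega_nonneg assms)
  finally show ?thesis
    unfolding P_def by simp
qed

lemma A2_squared_le:
  assumes "0 \<le> \<kappa> / m"
  shows "(A2 \<kappa> m N k1 k2 k3 k4)\<^sup>2
     \<le> 9 / (16 * \<kappa> ^ 4) * (omega \<kappa> m N k1 * omega \<kappa> m N k2 * omega \<kappa> m N k3 * omega \<kappa> m N k4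
       / (omega \<kappa> m N k1 - omega \<kappa> m N k2 + omega \<kappa> m N k3 + omega \<kappa> m N k4)\<^sup>2)"
  unfolding A2_def power_divide power2_minus times_divide_eq_right
  by (rule divide_right_mono[OF Tcoef_squared_le[OF assms]]) simp

definition phase :: "nat \<Rightarrow> int \<Rightarrow> real" where
  "phase N k = pi * real_of_int k / real N"

lemma abs_sin_phase_resonant:
  assumes "0 < N" and "int N dvd (k1 - k2 + k3 + k4)"
  shows "\<bar>sin (phase N k1 + phase N k3 + phase N k4)\<bar> = \<bar>sin (phase N k2)\<bar>"
proof -
  obtain j where "k1 - k2 + k3 + k4 = int N * j"
    using assms(2) by (elim dvdE)
  then have j: "k1 + k3 + k4 = k2 + int N * j"
    by linarith
  have "phase N k1 + phase N k3 + phase N k4 = pi * real_of_int (k1 + k3 + k4) / real N"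
    unfolding phase_def by (simp add: add_divide_distrib distrib_left)
  also have "\<dots> = phase N k2 + of_int j * pi"
    unfolding j phase_def using assms(1) by (simp add: field_simps)
  finally show ?thesis
    by (simp add: abs_sin_add_int_mult_pi)
qed

lemma abs_sin_phase_ge:
  assumes "0 < k" and "k < int N"
  shows "2 * real (min (nat k) (N - nat k)) / real N \<le> \<bar>sin (phase N k)\<bar>"
proof -
  have "2 * real (min (nat k) (N - nat k)) / real N \<le> sin (phase N k)"
    using sin_pi_mult_div_ge[of "nat k" N] assms unfolding phase_def by simp
  then show ?thesis
    using abs_ge_self[of "sin (phase N k)"] by linarith
qed

lemma omega_ratio_eq_sin_defect:
  assumes "0 \<le> \<kappa> / m" and "0 < N" and "int N dvd (k1 - k2 + k3 + k4)"
  defines "a \<equiv> phase N k1" and "b \<equiv> phase N k3" and "c \<equiv> phase N k4"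
  shows "omega \<kappa> m N k1 * omega \<kappa> m N k2 * omega \<kappa> m N k3 * omega \<kappa> m N k4
         / (omega \<kappa> m N k1 - omega \<kappa> m N k2 + omega \<kappa> m N k3 + omega \<kappa> m N k4)\<^sup>2
       = 4 * (\<kappa> / m) * (\<bar>sin a\<bar> * \<bar>sin (a + b + c)\<bar> * \<bar>sin b\<bar> * \<bar>sin c\<bar> / (sin_defect a b c)\<^sup>2)"
proof -
  define r where "r = 2 * sqrt (\<kappa> / m)"
  have omega: "omega \<kappa> m N k = r * \<bar>sin (phase N k)\<bar>" for k
    unfolding omega_def phase_def r_def ..
  define S where "S = \<bar>sin a\<bar> * \<bar>sin (a + b + c)\<bar> * \<bar>sin b\<bar> * \<bar>sin c\<bar>"
  define D where "D = sin_defect a b c"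
  have "\<bar>sin (phase N k2)\<bar> = \<bar>sin (a + b + c)\<bar>"
    using abs_sin_phase_resonant[OF assms(2,3)] unfolding a_def b_def c_def by simp
  then have "omega \<kappa> m N k1 - omega \<kappa> m N k2 + omega \<kappa> m N k3 + omega \<kappa> m N k4 = r * D"
    and "omega \<kappa> m N k1 * omega \<kappa> m N k2 * omega \<kappa> m N k3 * omega \<kappa> m N k4 = r\<^sup>2 * (r\<^sup>2 * S)"
    unfolding omega D_def S_def sin_defect_def a_def b_def c_def
    by (simp_all add: algebra_simps power2_eq_square)
  moreover have "r\<^sup>2 * (r\<^sup>2 * S) / (r * D)\<^sup>2 = r\<^sup>2 * (S / D\<^sup>2)"
  proof (cases "r = 0")
    case False
    then have "r\<^sup>2 * (r\<^sup>2 * S) / (r\<^sup>2 * D\<^sup>2) = r\<^sup>2 * S / D\<^sup>2"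
      by (intro mult_divide_mult_cancel_left) simp
    then show ?thesis
      by (simp only: power_mult_distrib times_divide_eq_right)
  qed simp
  moreover have "r\<^sup>2 = 4 * (\<kappa> / m)"
    unfolding r_def using assms(1) by (simp add: power_mult_distrib)
  ultimately show ?thesis
    unfolding S_def D_def by simp
qed

lemma omega_ratio_le:
  assumes "0 \<le> \<kappa> / m" and "(k2, k3, k4) \<in> sum_range N k1"
  shows "omega \<kappa> m N k1 * omega \<kappa> m N k2 * omega \<kappa> m N k3 * omega \<kappa> m N k4
         / (omega \<kappa> m N k1 - omega \<kappa> m N k2 + omega \<kappa> m N k3 + omega \<kappa> m N k4)\<^sup>2
       \<le> 4 * (\<kappa> / m) * (real N / real (max (min (nat k3) (N - nat k3)) (min (nat k4) (N - nat k4))))\<^sup>2"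
proof -
  define M where "M = max (min (nat k3) (N - nat k3)) (min (nat k4) (N - nat k4))"
  have range: "0 < k3" "k3 < int N" "0 < k4" "k4 < int N" "int N dvd (k1 - k2 + k3 + k4)"
    using assms(2) unfolding sum_range_def by auto
  then have "0 < nat k3" "nat k3 < N" "0 < nat k4" "nat k4 < N"
    by auto
  then have "0 < M" "0 < N"
    by (auto simp: M_def less_max_iff_disj min_def)
  have "2 * real M / real N \<le> max \<bar>sin (phase N k3)\<bar> \<bar>sin (phase N k4)\<bar>"
    using abs_sin_phase_ge[of k3 N] abs_sin_phase_ge[of k4 N] range
    unfolding M_def by (auto simp: max_def divide_right_mono)
  then have "\<bar>sin a\<bar> * \<bar>sin (a + b + c)\<bar> * \<bar>sin b\<bar> * \<bar>sin c\<bar> / (sin_defect a b c)\<^sup>2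
      \<le> 4 / (2 * real M / real N)\<^sup>2"
    if "a = phase N k1" "b = phase N k3" "c = phase N k4" for a b c
    using \<open>0 < M\<close> \<open>0 < N\<close> that by (intro sin_prod_div_sin_defect_squared_le) auto
  moreover have "4 / (2 * real M / real N)\<^sup>2 = (real N / real M)\<^sup>2"
    by (simp add: power_divide)
  ultimately show ?thesis
    unfolding omega_ratio_eq_sin_defect[OF assms(1) \<open>0 < N\<close> range(5)] M_def[symmetric]
    using assms(1) by (intro mult_left_mono) auto
qed

lemma A2_squared_le_lattice:
  assumes "0 \<le> \<kappa> / m" and "(k2, k3, k4) \<in> sum_range N k1"
  shows "(A2 \<kappa> m N k1 k2 k3 k4)\<^sup>2
     \<le> 9 / (16 * \<kappa> ^ 4)
       * (4 * (\<kappa> / m) * (real N / real (max (min (nat k3) (N - nat k3)) (min (nat k4) (N - nat k4))))\<^sup>2)"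
  by (rule order_trans[OF A2_squared_le[OF assms(1)] mult_left_mono[OF omega_ratio_le[OF assms]]]) simp

lemma sum_range_unique_k2:
  assumes "(k2, k3, k4) \<in> sum_range N k1" and "(k2', k3, k4) \<in> sum_range N k1"
  shows "k2' = k2"
proof (rule ccontr)
  assume "k2' \<noteq> k2"
  have "int N dvd k1 - k2 + k3 + k4" "int N dvd k1 - k2' + k3 + k4"
    using assms unfolding sum_range_def by auto
  then have "int N dvd (k1 - k2 + k3 + k4) - (k1 - k2' + k3 + k4)"
    by (rule dvd_diff)
  also have "(k1 - k2 + k3 + k4) - (k1 - k2' + k3 + k4) = k2' - k2"
    by simp
  finally have "int N dvd (k2' - k2)" .
  then have "int N \<le> \<bar>k2' - k2\<bar>"
    using \<open>k2' \<noteq> k2\<close> dvd_imp_le_int[of "k2' - k2" "int N"] by simp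
  then show False
    using assms unfolding sum_range_def by auto
qed

lemma sum_over_sum_range_le:
  fixes g :: "nat \<Rightarrow> nat \<Rightarrow> real"
  assumes "\<And>y z. 0 \<le> g y z"
  shows "(\<Sum>(k2, k3, k4) \<in> sum_range N k1. g (nat k3) (nat k4)) \<le> (\<Sum>y\<in>{1..N-1}. \<Sum>z\<in>{1..N-1}. g y z)"
proof -
  define h :: "int \<times> int \<times> int \<Rightarrow> nat \<times> nat" where "h = (\<lambda>(k2, k3, k4). (nat k3, nat k4))"
  have "inj_on h (sum_range N k1)"
  proof (rule inj_onI)
    fix p q
    assume p: "p \<in> sum_range N k1" and q: "q \<in> sum_range N k1" and "h p = h q"
    obtain k2 k3 k4 k2' k3' k4' where pq: "p = (k2, k3, k4)" "q = (k2', k3', k4')"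
      by (cases p, cases q) auto
    have "k3' = k3" "k4' = k4"
      using p q \<open>h p = h q\<close> unfolding pq h_def sum_range_def by auto
    then show "p = q"
      using sum_range_unique_k2[of k2 k3 k4 N k1 k2'] p q unfolding pq by auto
  qed
  have "(\<lambda>(k2, k3, k4). g (nat k3) (nat k4)) = case_prod g \<circ> h"
    by (auto simp: h_def)
  then have "(\<Sum>(k2, k3, k4) \<in> sum_range N k1. g (nat k3) (nat k4)) = (\<Sum>p \<in> h ` sum_range N k1. case_prod g p)"
    using sum.reindex[OF \<open>inj_on h (sum_range N k1)\<close>, of "case_prod g"] by simp
  also have "\<dots> \<le> (\<Sum>p \<in> {1..N-1} \<times> {1..N-1}. case_prod g p)"
  proof (rule sum_mono2)
    show "h ` sum_range N k1 \<subseteq> {1..N-1} \<times> {1..N-1}"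
      unfolding h_def sum_range_def by auto
  qed (use assms in auto)
  also have "\<dots> = (\<Sum>y\<in>{1..N-1}. \<Sum>z\<in>{1..N-1}. g y z)"
    by (rule sum.cartesian_product[symmetric])
  finally show ?thesis .
qed

theorem mainTheorem3:
  fixes \<kappa> m :: real
  assumes "\<kappa> > 0" and "m > 0"
  shows "\<exists>C > 0. \<forall>(N::nat) (k1::int). N \<ge> 2 \<longrightarrow> 0 < k1 \<longrightarrow> k1 < int N \<longrightarrow>
           (\<Sum>(k2, k3, k4) \<in> sum_range N k1. \<bar>A2 \<kappa> m N k1 k2 k3 k4\<bar>\<^sup>2)
             \<le> C * real N ^ 2 * ln (real N)"
proof -
  define K where "K = 9 / (16 * \<kappa> ^ 4) * (4 * (\<kappa> / m))"
  define C where "C = 8 * K * (1 + 1 / ln 2)"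
  have "0 < K"
    using assms by (simp add: K_def)
  then have "0 < C"
    unfolding C_def by (intro mult_pos_pos add_pos_pos) simp_all
  show ?thesis
  proof (intro exI[of _ C] conjI allI impI \<open>0 < C\<close>)
    fix N :: nat and k1 :: int
    \<comment> \<open>The bound is uniform in \<open>k1\<close>.\<close>
    assume "2 \<le> N"
    have "1 \<le> ln (real N) / ln 2"
      using \<open>2 \<le> N\<close> by simp
    then have ln_N: "1 + ln (real N) \<le> (1 + 1 / ln 2) * ln (real N)"
      by (simp add: field_simps)
    define f where "f y z = (real N / real (max (min y (N - y)) (min z (N - z)))) ^ 2" for y z
    have "\<bar>A2 \<kappa> m N k1 k2 k3 k4\<bar>\<^sup>2 \<le> K * f (nat k3) (nat k4)" if "(k2, k3, k4) \<in> sum_range N k1" for k2 k3 k4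
      using A2_squared_le_lattice[OF _ that] assms unfolding K_def f_def by (simp add: mult.assoc)
    then have "(\<Sum>(k2, k3, k4) \<in> sum_range N k1. \<bar>A2 \<kappa> m N k1 k2 k3 k4\<bar>\<^sup>2)
        \<le> (\<Sum>(k2, k3, k4) \<in> sum_range N k1. K * f (nat k3) (nat k4))"
      by (intro sum_mono) auto
    also have "\<dots> \<le> (\<Sum>y\<in>{1..N-1}. \<Sum>z\<in>{1..N-1}. K * f y z)"
      using \<open>0 < K\<close> by (intro sum_over_sum_range_le) (simp add: f_def)
    also have "\<dots> = K * real N ^ 2 * (\<Sum>y\<in>{1..N-1}. \<Sum>z\<in>{1..N-1}. 1 / real (max (min y (N - y)) (min z (N - z))) ^ 2)"
      by (simp add: f_def power_divide sum_distrib_left)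
    also have "\<dots> \<le> K * real N ^ 2 * (8 * (1 + ln (real N)))"
      using sum_inverse_square_max_min_le[of N] \<open>2 \<le> N\<close> \<open>0 < K\<close> by (intro mult_left_mono) auto
    also have "\<dots> \<le> K * real N ^ 2 * (8 * ((1 + 1 / ln 2) * ln (real N)))"
      using ln_N \<open>0 < K\<close> by (intro mult_left_mono) auto
    also have "\<dots> = C * real N ^ 2 * ln (real N)"
      by (simp add: C_def algebra_simps)
    finally show "(\<Sum>(k2, k3, k4) \<in> sum_range N k1. \<bar>A2 \<kappa> m N k1 k2 k3 k4\<bar>\<^sup>2) \<le> C * real N ^ 2 * ln (real N)" .
  qed
qed

end
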